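(* Let $h:[0,r_0]\to[0,\infty)$ be a continuous increasing function with $h(0)=0$ such that $\sum_{n=N}^\infty n\,h\!\left(n^{-n^2}\right)<+\infty$ (for some $N$ with $N^{-N^2}\leq r_0$). Then $\mathcal{H}^h(\mathcal{S})=0$. Moreover, $\mathcal{S}$ contains a dense $G_\delta$ subset of $(0,1)$; in particular $\mathcal{S}$ is uncountable.
   Context: For $\alpha\in(0,1)\setminus\mathbb{Q}$ let $p_s/q_s$ be its continued fraction convergents ($\alpha=[0;a_1,a_2,\dots]$, $q_s=a_sq_{s-1}+q_{s-2}$, $q_0=1$, $q_{-1}=0$). Define $\mathcal{S}=\left\{\alpha\in(0,1)\setminus\mathbb{Q}:\ \limsup_{s\to\infty}\frac{\log q_{s+1}}{q_s^2\log q_s}=+\infty\right\}$. For $E\subset\mathbb{C}$ and $\delta>0$, $\mathcal{H}^h_\delta(E)=\inf\sum_n h(\operatorname{diam}A_n/2)$, the infimum over all countable coverings of $E$ by bounded sets $A_n$ of diameter less than $\delta$; the Hausdorff $h$-measure is $\mathcal{H}^h(E)=\lim_{\delta\to0}\mathcal{H}^h_\delta(E)$. *)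

theory Defs
  imports "HOL-Analysis.Analysis"
begin

text \<open>Continued fraction expansion alpha = [0; a_1, a_2, ...] via the Gauss map:
  x_0 = alpha, x_(s+1) = frac (1 / x_s), a_(s+1) = floor (1 / x_s).\<close>
fun cf_rem :: "real \<Rightarrow> nat \<Rightarrow> real" where
  "cf_rem \<alpha> 0 = \<alpha>"
| "cf_rem \<alpha> (Suc n) = frac (1 / cf_rem \<alpha> n)"

definition cf_a :: "real \<Rightarrow> nat \<Rightarrow> nat" where
  "cf_a \<alpha> s = nat \<lfloor>1 / cf_rem \<alpha> (s - 1)\<rfloor>"   \<comment> \<open>a_s, meaningful for s >= 1\<close>

text \<open>cf_qpair alpha s = (q_s, q_(s-1)), with q_0 = 1, q_(-1) = 0,
  q_s = a_s q_(s-1) + q_(s-2).\<close>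
fun cf_qpair :: "real \<Rightarrow> nat \<Rightarrow> nat \<times> nat" where
  "cf_qpair \<alpha> 0 = (1, 0)"
| "cf_qpair \<alpha> (Suc n) = (cf_a \<alpha> (Suc n) * fst (cf_qpair \<alpha> n) + snd (cf_qpair \<alpha> n), fst (cf_qpair \<alpha> n))"

definition cf_q :: "real \<Rightarrow> nat \<Rightarrow> nat" where
  "cf_q \<alpha> s = fst (cf_qpair \<alpha> s)"

definition setS :: "real set" where
  "setS = {\<alpha>. 0 < \<alpha> \<and> \<alpha> < 1 \<and> \<alpha> \<notin> \<rat> \<and>
     limsup (\<lambda>s. ereal (ln (real (cf_q \<alpha> (s + 1))) /
                         ((real (cf_q \<alpha> s))\<^sup>2 * ln (real (cf_q \<alpha> s))))) = \<infinity>}"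

definition hausdorff_delta :: "(real \<Rightarrow> real) \<Rightarrow> real \<Rightarrow> complex set \<Rightarrow> ennreal" where
  "hausdorff_delta h \<delta> E = (INF A \<in> {A :: nat \<Rightarrow> complex set. E \<subseteq> (\<Union>n. A n) \<and>
        (\<forall>n. bounded (A n) \<and> diameter (A n) < \<delta>)}.
        (\<Sum>n. ennreal (h (diameter (A n) / 2))))"

text \<open>H^h(E) = lim_(delta -> 0) H^h_delta(E); since H^h_delta is antitone in delta
  this limit equals the supremum over delta > 0.\<close>
definition hausdorff_h :: "(real \<Rightarrow> real) \<Rightarrow> complex set \<Rightarrow> ennreal" where
  "hausdorff_h h E = (SUP \<delta> \<in> {0<..}. hausdorff_delta h \<delta> E)"

end

theory Submission
  imports Defs
begin

text \<open>
  For alpha in S the denominators of the convergents jump infinitely often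
  from q_s to q_(s+1) > q_s^(q_s^2).  Each such jump makes p_s/q_s approximate alpha to within
  q_s^(-q_s^2).  Hence, for every q0, S is covered by the balls of radius q^(-q^2) around
  the fractions p/q with 0 <= p <= q and q >= q0; there are q + 1 of them for each q, so
  H^h_delta(S) is bounded by the tail of the series sum_q (q + 1) h(q^(-q^2)), which tends to 0.
  Conversely, a fraction p/q approximating alpha extremely well must be a convergent followed
  by a huge denominator (a Legendre-type argument), so the irrationals lying in all the open
  dense sets near_fractions k belong to S.  The Baire category theorem then yields a dense
  G_delta subset of S, and uncountability follows by removing in addition the points of a
  hypothetical countable S.
\<close>

text \<open>Numerators of the convergents: p_0 = 0, p_(-1) = 1, p_s = a_s p_(s-1) + p_(s-2).
  As for cf_qpair, the pair stores (p_s, p_(s-1)).\<close>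
fun cf_ppair :: "real \<Rightarrow> nat \<Rightarrow> nat \<times> nat" where
  "cf_ppair \<alpha> 0 = (0, 1)"
| "cf_ppair \<alpha> (Suc n) = (cf_a \<alpha> (Suc n) * fst (cf_ppair \<alpha> n) + snd (cf_ppair \<alpha> n), fst (cf_ppair \<alpha> n))"

definition cf_ratio :: "real \<Rightarrow> nat \<Rightarrow> real" where
  "cf_ratio \<alpha> s = ln (real (cf_q \<alpha> (s + 1))) / ((real (cf_q \<alpha> s))\<^sup>2 * ln (real (cf_q \<alpha> s)))"

lemma setS_iff:
  "\<alpha> \<in> setS \<longleftrightarrow> 0 < \<alpha> \<and> \<alpha> < 1 \<and> \<alpha> \<notin> \<rat> \<and> limsup (\<lambda>s. ereal (cf_ratio \<alpha> s)) = \<infinity>"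
  by (simp add: setS_def cf_ratio_def)

locale unit_irrational =
  fixes \<alpha> :: real
  assumes pos: "0 < \<alpha>" and lt1: "\<alpha> < 1" and irrational: "\<alpha> \<notin> \<rat>"
begin

abbreviation "P s \<equiv> real (fst (cf_ppair \<alpha> s))"
abbreviation "P' s \<equiv> real (snd (cf_ppair \<alpha> s))"
abbreviation "Q s \<equiv> real (fst (cf_qpair \<alpha> s))"
abbreviation "Q' s \<equiv> real (snd (cf_qpair \<alpha> s))"
abbreviation "X s \<equiv> cf_rem \<alpha> s"

lemma cf_rem_bounds: "0 < X n \<and> X n < 1 \<and> X n \<notin> \<rat>"
proof (induction n)
  case 0 then show ?case using pos lt1 irrational by simp
next
  case (Suc n)
  define x where "x = X n"
  have x: "0 < x" "x < 1" "x \<notin> \<rat>" using Suc x_def by auto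
  have inv_irr: "1/x \<notin> \<rat>"
  proof
    assume "1/x \<in> \<rat>" then have "1/(1/x) \<in> \<rat>" by (rule Rats_divide[OF Rats_1])
    with x show False by simp
  qed
  have frac_irr: "frac (1/x) \<notin> \<rat>"
  proof
    assume "frac (1/x) \<in> \<rat>"
    then have "frac (1/x) + of_int \<lfloor>1/x\<rfloor> \<in> \<rat>" by (intro Rats_add) auto
    then show False using inv_irr by (simp add: frac_def)
  qed
  then have "frac (1/x) \<noteq> 0" by (metis Rats_0)
  then have "0 < frac (1/x)" using frac_ge_0[of "1/x"] by linarith
  then show ?case using frac_irr frac_lt_1[of "1/x"] by (simp add: x_def)
qed

lemma cf_a_step: "cf_a \<alpha> (Suc n) \<ge> 1 \<and> 1 / X n = real (cf_a \<alpha> (Suc n)) + X (Suc n)"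
proof -
  define x where "x = X n"
  have "1 < 1/x" using cf_rem_bounds x_def by simp
  then have fl: "\<lfloor>1/x\<rfloor> \<ge> 1" by simp
  then have r: "real (nat \<lfloor>1/x\<rfloor>) = of_int \<lfloor>1/x\<rfloor>" "nat \<lfloor>1/x\<rfloor> \<ge> 1"
    by linarith+
  have "X (Suc n) = 1/x - of_int \<lfloor>1/x\<rfloor>" by (simp add: x_def frac_def)
  then show ?thesis using fl r unfolding cf_a_def by (simp add: x_def)
qed

text \<open>From here on remainders are manipulated only through cf_a_step.\<close>
declare cf_rem.simps(2)[simp del]

lemma q_step: "fst (cf_qpair \<alpha> (Suc n)) \<ge> fst (cf_qpair \<alpha> n) + snd (cf_qpair \<alpha> n)"
proof -
  have "cf_a \<alpha> (Suc n) * fst (cf_qpair \<alpha> n) \<ge> 1 * fst (cf_qpair \<alpha> n)"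
    using cf_a_step[of n] by (intro mult_le_mono1) simp
  then show ?thesis by simp
qed

lemma q_ge1: "fst (cf_qpair \<alpha> n) \<ge> 1"
proof (induction n)
  case (Suc n) then show ?case using q_step[of n] by linarith
qed simp

lemma q_ge_n: "fst (cf_qpair \<alpha> n) \<ge> n"
proof (induction n)
  case 0 then show ?case by simp
next
  case (Suc n)
  show ?case
  proof (cases n)
    case 0 then show ?thesis using q_ge1[of 1] by simp
  next
    case (Suc m)
    then have "snd (cf_qpair \<alpha> n) \<ge> 1" using q_ge1[of m] by simp
    then show ?thesis using q_step[of n] Suc.IH by linarith
  qed
qed

lemma convergent_det: "P n * Q' n - P' n * Q n = (-1) ^ (n+1)"
  by (induction n) (simp_all add: algebra_simps)

lemma alpha_from_remainder: "\<alpha> = (P n + X n * P' n) / (Q n + X n * Q' n)"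
proof (induction n)
  case 0 then show ?case by simp
next
  case (Suc n)
  define a where "a = real (cf_a \<alpha> (Suc n))"
  define y where "y = X (Suc n)"
  have y: "0 < y" using cf_rem_bounds y_def by auto
  have a: "a \<ge> 1" using cf_a_step[of n] by (simp add: a_def)
  have "1 / X n = a + y" using cf_a_step[of n] by (simp add: a_def y_def)
  then have x: "X n = 1 / (a + y)" by (metis divide_divide_eq_right div_by_1 mult_1)
  have "\<alpha> = (P n + X n * P' n) / (Q n + X n * Q' n)" by (rule Suc)
  also have "\<dots> = ((P n * (a + y) + P' n) / (a + y)) / ((Q n * (a + y) + Q' n) / (a + y))"
    unfolding x using a y by (simp add: field_simps)
  also have "\<dots> = (P n * (a + y) + P' n) / (Q n * (a + y) + Q' n)"
    using a y by simp
  also have "\<dots> = (P (Suc n) + X (Suc n) * P' (Suc n)) / (Q (Suc n) + X (Suc n) * Q' (Suc n))"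
    by (simp add: a_def y_def algebra_simps)
  finally show ?case .
qed

lemma convergent_error: "\<bar>\<alpha> - P n / Q n\<bar> = 1 / (Q n * (Q (Suc n) + X (Suc n) * Q n))"
proof -
  define a where "a = real (cf_a \<alpha> (Suc n))"
  define y where "y = X (Suc n)"
  define x where "x = X n"
  have ax: "1 / x = a + y" using cf_a_step[of n] by (simp add: a_def y_def x_def)
  have x: "0 < x" using cf_rem_bounds x_def by auto
  have Q: "Q n \<ge> 1" using q_ge1[of n] by simp
  have D: "Q n + x * Q' n > 0" using Q x by (smt (verit) mult_nonneg_nonneg of_nat_0_le_iff)
  have "\<alpha> - P n / Q n = (P n + x * P' n) / (Q n + x * Q' n) - P n / Q n"
    using alpha_from_remainder[of n] unfolding x_def by simp
  also have "\<dots> = ((P n + x * P' n) * Q n - P n * (Q n + x * Q' n)) / ((Q n + x * Q' n) * Q n)"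
    using D Q by (intro diff_frac_eq) auto
  also have "\<dots> = x * (P' n * Q n - P n * Q' n) / (Q n * (Q n + x * Q' n))"
    by (simp add: algebra_simps)
  finally have "\<alpha> - P n / Q n = x * (P' n * Q n - P n * Q' n) / (Q n * (Q n + x * Q' n))" .
  moreover have "\<bar>P' n * Q n - P n * Q' n\<bar> = 1" using convergent_det[of n]
    by (simp add: abs_minus_commute)
  ultimately have "\<bar>\<alpha> - P n / Q n\<bar> = x / (Q n * (Q n + x * Q' n))"
    using x D Q by (simp add: abs_mult abs_divide)
  also have "\<dots> = 1 / (Q n * (Q n * (1 / x) + Q' n))"
    using x D Q by (simp add: field_simps)
  finally show ?thesis unfolding ax a_def y_def by (simp add: algebra_simps)
qed

lemma convergent_error_upper: "\<bar>\<alpha> - P n / Q n\<bar> < 1 / (Q n * Q (Suc n))"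
proof -
  have Q: "Q n \<ge> 1" "Q (Suc n) \<ge> 1" using q_ge1 by (auto simp del: cf_qpair.simps)
  have "X (Suc n) > 0" using cf_rem_bounds by auto
  then have "Q (Suc n) < Q (Suc n) + X (Suc n) * Q n" using Q by simp
  then show ?thesis unfolding convergent_error using Q
    by (intro divide_strict_left_mono mult_strict_left_mono) auto
qed

lemma convergent_error_lower: "1 / (Q n * (Q (Suc n) + Q n)) < \<bar>\<alpha> - P n / Q n\<bar>"
proof -
  have Q: "Q n \<ge> 1" "Q (Suc n) \<ge> 1" using q_ge1 by (auto simp del: cf_qpair.simps)
  have "0 \<le> X (Suc n)" "X (Suc n) < 1" using cf_rem_bounds[of "Suc n"] by auto
  then have "0 < Q (Suc n) + X (Suc n) * Q n" "Q (Suc n) + X (Suc n) * Q n < Q (Suc n) + Q n"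
    using Q by (auto intro: add_pos_nonneg)
  then show ?thesis unfolding convergent_error using Q
    by (intro divide_strict_left_mono mult_strict_left_mono) auto
qed

lemma cf_ratio_eq: "cf_ratio \<alpha> s = ln (Q (Suc s)) / ((Q s)\<^sup>2 * ln (Q s))"
  by (simp add: cf_ratio_def cf_q_def)

lemma denominator_bracket:
  assumes "q \<ge> 1"
  obtains s where "fst (cf_qpair \<alpha> s) \<le> q" "q < fst (cf_qpair \<alpha> (Suc s))"
proof -
  define S where "S = {s. fst (cf_qpair \<alpha> s) \<le> q}"
  have "finite S"
    by (rule finite_subset[of _ "{..q}"]) (use q_ge_n in \<open>auto simp: S_def intro: le_trans\<close>)
  moreover have "0 \<in> S" using assms by (simp add: S_def)
  ultimately have "Max S \<in> S" "Suc (Max S) \<notin> S"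
    by (metis Max_in empty_iff, metis Max_ge Suc_n_not_le_n)
  then show ?thesis using that unfolding S_def by auto
qed

lemma jump_gives_good_approximation:
  assumes "cf_ratio \<alpha> s > 1"
  shows "\<bar>\<alpha> - P s / Q s\<bar> < 1 / Q s ^ ((fst (cf_qpair \<alpha> s))\<^sup>2)"
    and "fst (cf_ppair \<alpha> s) \<le> fst (cf_qpair \<alpha> s)"
proof -
  define m where "m = (fst (cf_qpair \<alpha> s))\<^sup>2"
  have Q1: "Q (Suc s) \<ge> 1" using q_ge1[of "Suc s"] by (simp del: cf_qpair.simps)
  have Qs: "Q s \<ge> 2"
  proof (rule ccontr)
    assume "\<not> Q s \<ge> 2"
    then have "Q s = 1" using q_ge1[of s] by simp
    then show False using assms by (simp add: cf_ratio_eq)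
  qed
  have "1 < ln (Q (Suc s)) / ((Q s)\<^sup>2 * ln (Q s))" using assms by (simp add: cf_ratio_eq)
  then have "(Q s)\<^sup>2 * ln (Q s) < ln (Q (Suc s))" using Qs by (simp add: less_divide_eq)
  moreover have "ln (Q s ^ m) = (Q s)\<^sup>2 * ln (Q s)" using Qs by (simp add: ln_realpow m_def)
  ultimately have "ln (Q s ^ m) < ln (Q (Suc s))" by simp
  then have jump: "Q s ^ m < Q (Suc s)" using Qs Q1 by (subst (asm) ln_less_cancel_iff) auto
  have "1 / (Q s * Q (Suc s)) \<le> 1 / Q (Suc s)" using Qs Q1
    by (intro divide_left_mono) (auto simp del: cf_qpair.simps)
  also have "\<dots> < 1 / Q s ^ m"
  proof (rule divide_strict_left_mono)
    show "0 < Q (Suc s) * Q s ^ m" using Q1 Qs by (intro mult_pos_pos) auto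
  qed (use jump in auto)
  finally show "\<bar>\<alpha> - P s / Q s\<bar> < 1 / Q s ^ ((fst (cf_qpair \<alpha> s))\<^sup>2)"
    using convergent_error_upper[of s] unfolding m_def by linarith
  have "1 / (Q s * Q (Suc s)) \<le> 1 / Q s" using Qs Q1
    by (intro divide_left_mono) (auto simp del: cf_qpair.simps)
  then have "P s / Q s < 1 + 1 / Q s" using convergent_error_upper[of s] lt1 by linarith
  then have "P s < Q s + 1" using Qs by (simp add: field_simps)
  then show "fst (cf_ppair \<alpha> s) \<le> fst (cf_qpair \<alpha> s)" by linarith
qed

lemma close_fraction_is_convergent:
  assumes s: "fst (cf_qpair \<alpha> s) \<le> q" "q < fst (cf_qpair \<alpha> (Suc s))"
    and close: "\<bar>\<alpha> - real p / real q\<bar> < 1 / (real q + 1) ^ 3"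
  shows "real p * Q s = P s * real q"
proof (rule ccontr)
  assume ne: "real p * Q s \<noteq> P s * real q"
  have Qs: "Q s \<ge> 1" using q_ge1[of s] by simp
  have Qq: "Q s \<le> real q" using s(1) by simp
  have q: "real q \<ge> 1" using Qs Qq by simp
  have Q1: "Q (Suc s) \<ge> real q + 1" using s(2)
    by (metis Suc_leI of_nat_Suc of_nat_le_iff add.commute)
  define d where "d = int p * int (fst (cf_qpair \<alpha> s)) - int (fst (cf_ppair \<alpha> s)) * int q"
  have "real_of_int d = real p * Q s - P s * real q" by (simp add: d_def)
  moreover have "d \<noteq> 0" using ne calculation by auto
  ultimately have d1: "\<bar>real p * Q s - P s * real q\<bar> \<ge> 1" by linarith
  have "real p / real q - P s / Q s = (real p * Q s - P s * real q) / (real q * Q s)"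
    using q Qs by (intro diff_frac_eq) auto
  then have "\<bar>real p / real q - P s / Q s\<bar> = \<bar>real p * Q s - P s * real q\<bar> / (real q * Q s)"
    using q Qs by (simp add: abs_divide)
  also have "\<dots> \<ge> 1 / (real q * Q s)" using d1 q Qs by (intro divide_right_mono) auto
  finally have far: "1 / (real q * Q s) \<le> \<bar>real p / real q - P s / Q s\<bar>" .
  have "1 / (Q s * Q (Suc s)) \<le> 1 / (Q s * (real q + 1))" using Q1 Qs q
    by (intro divide_left_mono mult_left_mono) auto
  then have "1 / (real q * Q s) < 1 / (real q + 1) ^ 3 + 1 / (Q s * (real q + 1))"
    using far close convergent_error_upper[of s] by linarith
  moreover have "1 / (real q * Q s) - 1 / (Q s * (real q + 1)) = 1 / (real q * Q s * (real q + 1))"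
    using q Qs by (simp add: divide_simps)
  ultimately have lt: "1 / (real q * Q s * (real q + 1)) < 1 / (real q + 1) ^ 3" by linarith
  have "real q * Q s \<le> (real q + 1) * (real q + 1)" using Qq q Qs by (intro mult_mono) auto
  then have "real q * Q s * (real q + 1) \<le> (real q + 1) ^ 3"
    using q by (simp add: power3_eq_cube mult_right_mono)
  then have "1 / (real q + 1) ^ 3 \<le> 1 / (real q * Q s * (real q + 1))"
    using q Qs by (intro divide_left_mono) auto
  then show False using lt by linarith
qed

lemma close_fraction_next_denominator:
  assumes s: "fst (cf_qpair \<alpha> s) \<le> q" "q < fst (cf_qpair \<alpha> (Suc s))"
    and B: "B \<ge> 1"
    and close: "\<bar>\<alpha> - real p / real q\<bar> < 1 / ((real q + 1) ^ 3 * B)"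
  shows "B < Q (Suc s)"
proof (rule ccontr)
  assume "\<not> B < Q (Suc s)"
  have Qs: "Q s \<ge> 1" using q_ge1[of s] by simp
  have Qq: "Q s \<le> real q" using s(1) by simp
  have q: "real q \<ge> 1" using Qs Qq by simp
  have Q1: "Q (Suc s) \<ge> real q" using s(2) by (metis less_imp_le of_nat_le_iff)
  have "1 / ((real q + 1) ^ 3 * B) \<le> 1 / (real q + 1) ^ 3"
    using B q by (intro divide_left_mono) (auto simp: mult_le_cancel_left1)
  then have "real p * Q s = P s * real q"
    using close by (intro close_fraction_is_convergent[OF s]) linarith
  then have "P s / Q s = real p / real q" using q Qs by (simp add: field_simps)
  then have "1 / (Q s * (Q (Suc s) + Q s)) < 1 / ((real q + 1) ^ 3 * B)"
    using convergent_error_lower[of s] close by simp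
  moreover have "0 < Q s * (Q (Suc s) + Q s)" using Qs Q1 q by simp
  ultimately have "(real q + 1) ^ 3 * B < Q s * (Q (Suc s) + Q s)"
    using q B by (simp add: divide_simps del: cf_qpair.simps)
  also have "\<dots> \<le> real q * (2 * B)"
    using Qq Qs Q1 \<open>\<not> B < Q (Suc s)\<close> by (intro mult_mono) auto
  also have "\<dots> \<le> (real q + 1) ^ 3 * B"
  proof -
    have "2 * real q \<le> (real q + 1) ^ 3" using q by (simp add: power3_eq_cube algebra_simps)
    then show ?thesis using B by (simp add: mult_right_mono)
  qed
  finally show False by simp
qed

lemma close_fraction_large_ratio:
  assumes q: "q \<ge> 2" and p: "0 < p" "p < q"
    and close: "\<bar>\<alpha> - real p / real q\<bar> < 1 / ((real q + 1) ^ 3 * real q ^ (k * q\<^sup>2))"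
  shows "\<exists>s. real k < cf_ratio \<alpha> s"
proof -
  obtain s where s: "fst (cf_qpair \<alpha> s) \<le> q" "q < fst (cf_qpair \<alpha> (Suc s))"
    using denominator_bracket[of q] q by auto
  have Qq: "Q s \<le> real q" using s(1) by simp
  have B: "real q ^ (k * q\<^sup>2) \<ge> 1" using q by simp
  have "1 / ((real q + 1) ^ 3 * real q ^ (k * q\<^sup>2)) \<le> 1 / (real q + 1) ^ 3"
    using B by (intro divide_left_mono) (auto simp: mult_le_cancel_left1 intro!: mult_pos_pos)
  then have conv: "real p * Q s = P s * real q"
    using close by (intro close_fraction_is_convergent[OF s]) linarith
  have Qs: "Q s \<ge> 2"
  proof (rule ccontr)
    assume "\<not> Q s \<ge> 2"
    then have "fst (cf_qpair \<alpha> s) = 1" using q_ge1[of s] by simp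
    then have "p = fst (cf_ppair \<alpha> s) * q" using conv by (simp flip: of_nat_mult)
    then show False using p by (cases "fst (cf_ppair \<alpha> s)") auto
  qed
  have "real q ^ (k * q\<^sup>2) < Q (Suc s)"
    using close_fraction_next_denominator[OF s B close] .
  then have "ln (real q ^ (k * q\<^sup>2)) < ln (Q (Suc s))" using B by (intro ln_less_cancel_iff[THEN iffD2]) auto
  then have "real k * ((real q)\<^sup>2 * ln (real q)) < ln (Q (Suc s))"
    using q by (simp add: ln_realpow)
  moreover have "real k * ((Q s)\<^sup>2 * ln (Q s)) \<le> real k * ((real q)\<^sup>2 * ln (real q))"
    using Qq Qs by (intro mult_left_mono mult_mono power_mono) auto
  moreover have "(Q s)\<^sup>2 * ln (Q s) > 0" using Qs by simp
  ultimately have "real k < ln (Q (Suc s)) / ((Q s)\<^sup>2 * ln (Q s))"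
    by (simp add: pos_less_divide_eq)
  then show ?thesis by (auto simp: cf_ratio_eq)
qed

end

lemma limsup_infinite_if_unbounded:
  fixes f :: "nat \<Rightarrow> real"
  assumes unbounded: "\<And>k::nat. \<exists>s. real k < f s"
  shows "limsup (\<lambda>s. ereal (f s)) = \<infinity>"
proof (rule ccontr)
  assume "limsup (\<lambda>s. ereal (f s)) \<noteq> \<infinity>"
  then obtain n :: nat where "limsup (\<lambda>s. ereal (f s)) < ereal (real n)"
    using less_PInf_Ex_of_nat by blast
  then have "eventually (\<lambda>s. ereal (f s) < ereal (real n)) sequentially"
    by (rule Limsup_lessD)
  then obtain s0 where tail: "\<And>s. s \<ge> s0 \<Longrightarrow> f s < real n"
    unfolding eventually_sequentially by auto
  define B where "B = Max (insert (real n) (f ` {..s0}))"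
  have "f s \<le> B" for s
  proof (cases "s \<le> s0")
    case True then show ?thesis unfolding B_def by (intro Max_ge) auto
  next
    case False
    have "real n \<le> B" unfolding B_def by (intro Max_ge) auto
    then show ?thesis using tail[of s] False by simp
  qed
  then show False using unbounded[of "nat \<lceil>B\<rceil>"] by (smt (verit) of_nat_ceiling)
qed

lemma limsup_infinite_frequently:
  fixes f :: "nat \<Rightarrow> real"
  assumes "limsup (\<lambda>s. ereal (f s)) = \<infinity>"
  shows "\<exists>s\<ge>s0. c < f s"
proof (rule ccontr)
  assume "\<not> ?thesis"
  then have "eventually (\<lambda>s. ereal (f s) < ereal (c + 1)) sequentially"
    unfolding eventually_sequentially by (auto simp: not_less intro!: exI[of _ s0])
  then have "limsup (\<lambda>s. ereal (f s)) \<le> ereal (c + 1)"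
    by (simp add: Limsup_bounded eventually_mono less_imp_le)
  then show False using assms by simp
qed

text \<open>Radius of the neighbourhood of p/q used at level k; its size makes a fraction in it
  force a convergent with cf_ratio > k (lemma close_fraction_large_ratio).\<close>
definition approx_radius :: "nat \<Rightarrow> nat \<Rightarrow> real" where
  "approx_radius k q = 1 / ((real q + 1) ^ 3 * real q ^ (k * q\<^sup>2))"

definition near_fractions :: "nat \<Rightarrow> real set" where
  "near_fractions k =
     (\<Union>q\<in>{k + 2..}. \<Union>p\<in>{0<..<q}. ball (real p / real q) (approx_radius k q))"

lemma open_near_fractions: "open (near_fractions k)"
  unfolding near_fractions_def by (intro open_UN ballI open_ball)

lemma rational_in_near_fractions:
  assumes "r \<in> \<rat>" "0 < r" "r < 1"
  shows "r \<in> near_fractions k"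
proof -
  obtain m n :: nat where mn: "n \<noteq> 0" "\<bar>r\<bar> = real m / real n"
    using Rats_abs_nat_div_natE[OF assms(1)] by metis
  define p where "p = m * (k + 2)"
  define q where "q = n * (k + 2)"
  have "real p / real q = real m / real n"
    unfolding p_def q_def of_nat_mult by (rule mult_divide_mult_cancel_right) simp
  then have r: "r = real p / real q" using mn assms(2) by simp
  have m: "real m = r * real n" using mn assms(2) by (simp add: field_simps)
  have "0 < real m" "real m < real n"
    using m assms(2,3) mn(1) mult_strict_right_mono[of r 1 "real n"] by auto
  then have "0 < m" "m < n" by simp_all
  then have "0 < p" "p < q" "k + 2 \<le> q"
    unfolding p_def q_def using mult_le_mono1[of 1 n "k + 2"] mult_less_mono1[of m n "k + 2"]
    by simp_all
  moreover have "0 < approx_radius k q" using \<open>k + 2 \<le> q\<close> by (simp add: approx_radius_def)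
  ultimately show ?thesis unfolding near_fractions_def r by force
qed

lemma near_fractions_dense:
  assumes x: "x \<in> {0..1}"
  shows "x \<in> closure (near_fractions k \<inter> {0<..<1})"
  unfolding closure_approachable
proof (intro allI impI)
  fix e :: real assume "e > 0"
  then obtain r where r: "r \<in> \<rat>" "max 0 (x - e) < r" "r < min 1 (x + e)"
    using Rats_dense_in_real[of "max 0 (x - e)" "min 1 (x + e)"] x by auto
  then have "r \<in> near_fractions k \<inter> {0<..<1}" using rational_in_near_fractions by auto
  moreover have "dist r x < e" using r by (auto simp: dist_real_def abs_less_iff)
  ultimately show "\<exists>y\<in>near_fractions k \<inter> {0<..<1}. dist y x < e" by blast
qed

lemma near_fractions_imp_setS:
  assumes a: "0 < \<alpha>" "\<alpha> < 1" "\<alpha> \<notin> \<rat>" and near: "\<And>k. \<alpha> \<in> near_fractions k"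
  shows "\<alpha> \<in> setS"
proof -
  interpret unit_irrational \<alpha> using a by unfold_locales
  have "\<exists>s. real k < cf_ratio \<alpha> s" for k
  proof -
    from near[of k] obtain q p where qp: "q \<ge> k + 2" "0 < p" "p < q"
      "dist \<alpha> (real p / real q) < approx_radius k q"
      unfolding near_fractions_def by (auto simp: dist_commute)
    then show ?thesis
      by (intro close_fraction_large_ratio[of q p]) (auto simp: approx_radius_def dist_real_def)
  qed
  then show ?thesis using a limsup_infinite_if_unbounded by (simp add: setS_iff)
qed

text \<open>The countable family of open sets to which the Baire category theorem is applied:
  the sets near_fractions k inside (0,1), and the complements of the points of C.\<close>
definition baire_family :: "real set \<Rightarrow> real set set" where
  "baire_family C = range (\<lambda>k. near_fractions k \<inter> {0<..<1}) \<union> (\<lambda>r. - {r}) ` C"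

lemma open_baire_family: "T \<in> baire_family C \<Longrightarrow> open T"
  unfolding baire_family_def using open_near_fractions by auto

lemma countable_baire_family: "countable C \<Longrightarrow> countable (baire_family C)"
  unfolding baire_family_def by simp

lemma closure_unit_interval_minus_point:
  assumes "x \<in> {0..1::real}"
  shows "x \<in> closure ({0..1} \<inter> - {r})"
proof -
  have "x islimpt {0..1}" using assms by simp
  then have "x islimpt insert r ({0..1} \<inter> - {r})" by (rule islimpt_subset) auto
  then have "x islimpt ({0..1} \<inter> - {r})" unfolding islimpt_insert .
  then show ?thesis by (simp add: closure_def)
qed

lemma baire_family_dense:
  assumes "countable C"
  shows "{0..1} \<subseteq> closure ({0..1} \<inter> \<Inter> (baire_family C))"
proof -
  have "{0..1::real} \<subseteq> closure (\<Inter> ((\<lambda>T. {0..1} \<inter> T) ` baire_family C))"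
  proof (rule Baire)
    fix T assume "T \<in> (\<lambda>T. {0..1} \<inter> T) ` baire_family C"
    then obtain T0 where T0: "T0 \<in> baire_family C" "T = {0..1} \<inter> T0" by auto
    have "openin (top_of_set {0..1}) T" using open_baire_family[OF T0(1)] T0(2) openin_open by blast
    moreover have "x \<in> closure T" if x: "x \<in> {0..1}" for x
      using T0(1) unfolding baire_family_def
    proof
      assume "T0 \<in> range (\<lambda>k. near_fractions k \<inter> {0<..<1})"
      then obtain k where "T0 = near_fractions k \<inter> {0<..<1}" by auto
      then have "T = near_fractions k \<inter> {0<..<1}" using T0(2) by auto
      then show ?thesis using near_fractions_dense[OF x] by simp
    next
      assume "T0 \<in> (\<lambda>r. - {r}) ` C"
      then show ?thesis using closure_unit_interval_minus_point[OF x] T0(2) by auto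
    qed
    ultimately show "openin (top_of_set {0..1}) T \<and> {0..1} \<subseteq> closure T" by auto
  qed (use countable_baire_family[OF assms] in auto)
  moreover have "\<Inter> ((\<lambda>T. {0..1} \<inter> T) ` baire_family C) = {0..1} \<inter> \<Inter> (baire_family C)"
    unfolding baire_family_def by auto
  ultimately show ?thesis by simp
qed

lemma baire_family_subset_setS:
  assumes "\<rat> \<subseteq> C"
  shows "\<Inter> (baire_family C) \<subseteq> setS"
proof
  fix \<alpha> assume a: "\<alpha> \<in> \<Inter> (baire_family C)"
  then have "\<alpha> \<in> near_fractions k \<inter> {0<..<1}" for k unfolding baire_family_def by blast
  moreover have "\<alpha> \<notin> \<rat>" using a assms unfolding baire_family_def by blast
  ultimately show "\<alpha> \<in> setS" by (intro near_fractions_imp_setS) auto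
qed

lemma setS_contains_dense_gdelta:
  "\<exists>G. G \<subseteq> setS \<and> gdelta_in euclideanreal G \<and> {0<..<1} \<subseteq> closure G"
proof (intro exI conjI)
  define G where "G = \<Inter> (baire_family \<rat>)"
  show "G \<subseteq> setS" using baire_family_subset_setS[of \<rat>] G_def by simp
  show "gdelta_in euclideanreal G"
    unfolding G_def
  proof (rule gdelta_in_Inter)
    show "countable (baire_family \<rat>)" by (simp add: countable_baire_family countable_rat)
    show "baire_family \<rat> \<noteq> {}" unfolding baire_family_def by auto
  qed (use open_baire_family in \<open>auto intro: open_imp_gdelta_in simp: open_openin[symmetric]\<close>)
  show "{0<..<1} \<subseteq> closure G"
    using baire_family_dense[OF countable_rat] closure_mono[of "{0..1} \<inter> G" G] G_def by fastforce
qed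

text \<open>If S were countable, removing S as well would leave a nonempty intersection inside S
  that avoids S.\<close>
lemma setS_uncountable: "uncountable setS"
proof
  assume "countable setS"
  then have C: "countable (\<rat> \<union> setS)" by (simp add: countable_rat)
  have "\<Inter> (baire_family (\<rat> \<union> setS)) \<subseteq> setS" by (rule baire_family_subset_setS) auto
  moreover have "\<Inter> (baire_family (\<rat> \<union> setS)) \<inter> setS = {}"
    unfolding baire_family_def by blast
  ultimately have "\<Inter> (baire_family (\<rat> \<union> setS)) = {}" by blast
  then show False using baire_family_dense[OF C] by auto
qed

definition cover_radius :: "nat \<Rightarrow> real" where
  "cover_radius q = 1 / real q ^ (q\<^sup>2)"

lemma cover_radius_pos: "q \<ge> 1 \<Longrightarrow> cover_radius q > 0"
  by (simp add: cover_radius_def)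

lemma cover_radius_antimono:
  assumes "1 \<le> m" "m \<le> n" shows "cover_radius n \<le> cover_radius m"
proof -
  have "real m ^ (m\<^sup>2) \<le> real n ^ (m\<^sup>2)" using assms by (intro power_mono) auto
  also have "\<dots> \<le> real n ^ (n\<^sup>2)" using assms by (intro power_increasing power_mono) auto
  finally show ?thesis unfolding cover_radius_def using assms by (intro divide_left_mono) auto
qed

lemma cover_radius_le: "q \<ge> 1 \<Longrightarrow> cover_radius q \<le> 1 / real q"
  unfolding cover_radius_def
  by (intro divide_left_mono) (auto intro: power_increasing[of 1, simplified] simp: power2_eq_square)

text \<open>Each point of S is within cover_radius q of some p/q in [0,1] with q arbitrarily large:
  take a convergent p_s/q_s with s large and cf_ratio alpha s > 1.\<close>
lemma setS_near_fractions:
  assumes "\<alpha> \<in> setS"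
  shows "\<exists>q p. q0 \<le> q \<and> p \<le> q \<and> \<bar>\<alpha> - real p / real q\<bar> < cover_radius q"
proof -
  have a: "0 < \<alpha>" "\<alpha> < 1" "\<alpha> \<notin> \<rat>" and lim: "limsup (\<lambda>s. ereal (cf_ratio \<alpha> s)) = \<infinity>"
    using assms by (auto simp: setS_iff)
  interpret unit_irrational \<alpha> using a by unfold_locales
  obtain s where s: "s \<ge> q0" "cf_ratio \<alpha> s > 1"
    using limsup_infinite_frequently[OF lim] by blast
  show ?thesis
    using jump_gives_good_approximation[OF s(2)] q_ge_n[of s] s(1)
    by (intro exI[of _ "fst (cf_qpair \<alpha> s)"] exI[of _ "fst (cf_ppair \<alpha> s)"])
       (auto simp: cover_radius_def)
qed

lemma suminf_ennreal_tail:
  fixes f :: "nat \<Rightarrow> real"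
  assumes nonneg: "\<And>q. q0 \<le> q \<Longrightarrow> 0 \<le> f q" and summ: "summable (\<lambda>i. f (i + q0))"
  shows "(\<Sum>q. ennreal (if q0 \<le> q then f q else 0)) = ennreal (\<Sum>i. f (i + q0))"
proof -
  define g where "g q = (if q0 \<le> q then f q else 0)" for q
  have "summable (\<lambda>i. g (i + q0))" using summ by (simp add: g_def)
  then have "summable g" by simp
  then have "(\<Sum>q. ennreal (g q)) = ennreal (suminf g)"
    using nonneg by (intro suminf_ennreal2) (auto simp: g_def[abs_def])
  also have "suminf g = (\<Sum>i. g (i + q0)) + (\<Sum>i<q0. g i)"
    using \<open>summable g\<close> by (rule suminf_split_initial_segment)
  finally show ?thesis by (simp add: g_def)
qed

text \<open>Covering estimate: if every point of E is within r q of a fraction p/q, p <= q, q >= q0,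
  and all these balls have diameter < delta, then H^h_delta(E) is at most the weighted tail
  sum of h (r q), each denominator q contributing q + 1 balls.\<close>
lemma hausdorff_delta_fraction_cover:
  fixes E :: "complex set" and r :: "nat \<Rightarrow> real"
  assumes cover: "\<And>z. z \<in> E \<Longrightarrow> \<exists>q p. q0 \<le> q \<and> p \<le> q \<and> dist z (of_real (real p / real q)) \<le> r q"
    and r: "\<And>q. q0 \<le> q \<Longrightarrow> 0 \<le> r q \<and> 2 * r q < \<delta>"
    and h0: "h 0 = 0" and hnn: "\<And>q. q0 \<le> q \<Longrightarrow> 0 \<le> h (r q)"
    and summ: "summable (\<lambda>i. real (i + q0 + 1) * h (r (i + q0)))"
  shows "hausdorff_delta h \<delta> E \<le> ennreal (\<Sum>i. real (i + q0 + 1) * h (r (i + q0)))"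
proof -
  define F where "F q = (if q0 \<le> q then real (q + 1) * h (r q) else 0)" for q
  define B :: "nat \<times> nat \<Rightarrow> complex set" where
    "B z = (if q0 \<le> fst z \<and> snd z \<le> fst z
            then cball (of_real (real (snd z) / real (fst z))) (r (fst z)) else {})" for z
  define A where "A n = B (prod_decode n)" for n
  have \<delta>: "0 < \<delta>" using r[of q0] by simp
  have diam: "diameter (B z) / 2 = (if q0 \<le> fst z \<and> snd z \<le> fst z then r (fst z) else 0)" for z
    unfolding B_def using r[of "fst z"] by auto
  have "E \<subseteq> (\<Union>n. A n)"
  proof
    fix z assume "z \<in> E"
    then obtain q p where "q0 \<le> q" "p \<le> q" "dist z (of_real (real p / real q)) \<le> r q"
      using cover by blast
    then have "z \<in> A (prod_encode (q, p))" by (simp add: A_def B_def dist_commute)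
    then show "z \<in> (\<Union>n. A n)" by blast
  qed
  moreover have "bounded (A n) \<and> diameter (A n) < \<delta>" for n
    using diam[of "prod_decode n"] r[of "fst (prod_decode n)"] \<delta>
    unfolding A_def by (auto simp: B_def split: if_splits)
  ultimately have "hausdorff_delta h \<delta> E \<le> (\<Sum>n. ennreal (h (diameter (A n) / 2)))"
    unfolding hausdorff_delta_def by (intro INF_lower) auto
  also have "\<dots> = (\<Sum>q. ennreal (F q))"
    unfolding A_def
  proof (rule suminf_ennreal_2dimen)
    fix q
    have "(\<Sum>p. ennreal (h (diameter (B (q, p)) / 2))) = (\<Sum>p\<le>q. ennreal (h (diameter (B (q, p)) / 2)))"
      by (rule suminf_finite) (auto simp: diam h0)
    also have "\<dots> = ennreal (F q)"
      using hnn[of q] by (simp add: diam F_def h0 ennreal_mult ennreal_of_nat_eq_real_of_nat)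
    finally show "ennreal (F q) = (\<Sum>p. ennreal (h (diameter (B (q, p)) / 2)))" by simp
  qed
  also have "\<dots> = ennreal (\<Sum>i. real (i + q0 + 1) * h (r (i + q0)))"
    unfolding F_def using hnn summ by (intro suminf_ennreal_tail) (auto simp: add.assoc)
  finally show ?thesis .
qed

lemma hausdorff_delta_setS_le_tail:
  assumes h0: "h 0 = 0" and hnn: "\<And>q. q0 \<le> q \<Longrightarrow> 0 \<le> h (cover_radius q)"
    and q0: "q0 \<ge> 1" "2 / real q0 < \<delta>"
    and summ: "summable (\<lambda>q. real (q + 1) * h (cover_radius q))"
  shows "hausdorff_delta h \<delta> (complex_of_real ` setS)
           \<le> ennreal (\<Sum>i. real (i + q0 + 1) * h (cover_radius (i + q0)))"
proof (rule hausdorff_delta_fraction_cover)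
  fix z assume "z \<in> complex_of_real ` setS"
  then obtain \<alpha> where "\<alpha> \<in> setS" "z = of_real \<alpha>" by blast
  moreover obtain q p where "q0 \<le> q" "p \<le> q" "\<bar>\<alpha> - real p / real q\<bar> < cover_radius q"
    using setS_near_fractions[OF \<open>\<alpha> \<in> setS\<close>] by blast
  ultimately show "\<exists>q p. q0 \<le> q \<and> p \<le> q \<and> dist z (of_real (real p / real q)) \<le> cover_radius q"
    by (metis dist_of_real dist_real_def less_imp_le)
next
  fix q assume "q0 \<le> q"
  then have "2 * cover_radius q \<le> 2 / real q0"
    using cover_radius_antimono[of q0 q] cover_radius_le[of q0] q0 by simp
  then show "0 \<le> cover_radius q \<and> 2 * cover_radius q < \<delta>"
    using q0 \<open>q0 \<le> q\<close> cover_radius_pos[of q] by simp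
next
  show "summable (\<lambda>i. real (i + q0 + 1) * h (cover_radius (i + q0)))"
    using summ summable_iff_shift[of "\<lambda>q. real (q + 1) * h (cover_radius q)" q0] by simp
qed (use h0 hnn in auto)

theorem hausdorff_setS_zero:
  fixes h :: "real \<Rightarrow> real" and r0 :: real
  assumes hnn: "\<And>x. x \<in> {0..r0} \<Longrightarrow> h x \<ge> 0"
    and h0: "h 0 = 0"
    and N: "N \<ge> 1" "cover_radius N \<le> r0"
    and summ: "summable (\<lambda>n. real (n + N) * h (cover_radius (n + N)))"
  shows "hausdorff_h h (complex_of_real ` setS) = 0"
proof -
  define F where "F q = real (q + 1) * h (cover_radius q)" for q
  have h_nonneg: "q \<ge> N \<Longrightarrow> 0 \<le> h (cover_radius q)" for q
    using hnn cover_radius_antimono[of N q] cover_radius_pos[of q] N by auto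
  have "summable (\<lambda>n. F (n + N))"
  proof (rule summable_comparison_test')
    show "summable (\<lambda>n. 2 * (real (n + N) * h (cover_radius (n + N))))"
      using summ by (rule summable_mult)
    fix n :: nat
    have "real (n + N + 1) \<le> 2 * real (n + N)" using N by simp
    then have "F (n + N) \<le> 2 * real (n + N) * h (cover_radius (n + N))"
      unfolding F_def using h_nonneg[of "n + N"] by (intro mult_right_mono) auto
    then show "norm (F (n + N)) \<le> 2 * (real (n + N) * h (cover_radius (n + N)))"
      using h_nonneg[of "n + N"] by (simp add: F_def algebra_simps)
  qed
  then have sumF: "summable F" by simp
  have "hausdorff_delta h \<delta> (complex_of_real ` setS) \<le> ennreal e" if "\<delta> > 0" "e > 0" for \<delta> e
  proof -
    obtain M where M: "\<And>m. m \<ge> M \<Longrightarrow> norm (\<Sum>i. F (i + m)) < e"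
      using suminf_exist_split[OF \<open>e > 0\<close> sumF] by auto
    define q0 where "q0 = max (max M N) (nat \<lceil>2 / \<delta>\<rceil> + 1)"
    have q0: "q0 \<ge> M" "q0 \<ge> N" "q0 \<ge> 1" "2 / \<delta> < real q0" using N unfolding q0_def by linarith+
    then have "2 / real q0 < \<delta>" using \<open>\<delta> > 0\<close> by (simp add: divide_less_eq mult.commute)
    have "hausdorff_delta h \<delta> (complex_of_real ` setS) \<le> ennreal (\<Sum>i. F (i + q0))"
      unfolding F_def using h0 h_nonneg q0 \<open>2 / real q0 < \<delta>\<close> sumF[unfolded F_def[abs_def]]
      by (intro hausdorff_delta_setS_le_tail[of h q0 \<delta>]) auto
    also have "\<dots> \<le> ennreal e" using M[OF q0(1)] by (intro ennreal_leI) simp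
    finally show ?thesis .
  qed
  then have "hausdorff_delta h \<delta> (complex_of_real ` setS) = 0" if "\<delta> > 0" for \<delta>
    using that by (metis add_0 ennreal_le_epsilon le_zero_eq)
  then show ?thesis unfolding hausdorff_h_def by simp
qed

theorem proposition1:
  fixes h :: "real \<Rightarrow> real" and r0 :: real
  assumes "r0 > 0"
    and "continuous_on {0..r0} h"
    and "mono_on {0..r0} h"
    and "\<And>x. x \<in> {0..r0} \<Longrightarrow> h x \<ge> 0"
    and "h 0 = 0"
    and "\<exists>N::nat. N \<ge> 1 \<and> 1 / real N ^ (N\<^sup>2) \<le> r0 \<and>
           summable (\<lambda>n. real (n + N) * h (1 / real (n + N) ^ ((n + N)\<^sup>2)))"
  shows "hausdorff_h h (complex_of_real ` setS) = 0
     \<and> (\<exists>G. G \<subseteq> setS \<and> gdelta_in euclideanreal G \<and> {0<..<1} \<subseteq> closure G)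
     \<and> uncountable setS"
proof -
  obtain N :: nat where "N \<ge> 1" "cover_radius N \<le> r0"
    "summable (\<lambda>n. real (n + N) * h (cover_radius (n + N)))"
    using assms(6) unfolding cover_radius_def by blast
  then have "hausdorff_h h (complex_of_real ` setS) = 0"
    using hausdorff_setS_zero[of r0 h] assms(4,5) by blast
  then show ?thesis using setS_contains_dense_gdelta setS_uncountable by blast
qed

end
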